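(* Let $n$ be odd and let $L$ be a reduced Latin square of order $n$ with rows $\sigma_1,\dots,\sigma_n$ and columns $\pi_1,\dots,\pi_n$ (as permutations). Let $\alpha\in S_n$, $j\in[n]$, and $\Theta=(\alpha,\ \alpha\pi_j\sigma_{\alpha^{-1}(1)}^{-1},\ \alpha\pi_j)$. Then $$\mathrm{par}(\Theta(L))=\mathrm{sgn}(\sigma_{\alpha^{-1}(1)})\,\mathrm{sgn}(\pi_j)\,\mathrm{par}(L).$$
   Context: A Latin square of order $n$ is an $n\times n$ array with entries in $[n]$, each symbol once in each row and column. Permutations compose right to left. An isotopism $(\alpha,\beta,\gamma)\in S_n^3$ acts by $(\alpha,\beta,\gamma)(L)=L'$ with $L'(\alpha(r),\beta(c))=\gamma(L(r,c))$. Rows and columns are viewed as permutations: if symbol $i$ appears in the $j$th place of a row (column) $\sigma$, then $\sigma(i)=j$; so row $r$ is $\sigma_r$ with $\sigma_r(L(r,c))=c$ and column $c$ is $\pi_c$ with $\pi_c(L(r,c))=r$. $L$ is reduced if its first row and first column are the identity permutation. $\mathrm{sgn}$ is the sign of a permutation, and $\mathrm{par}(L)$ is the product of the signs of all $n$ rows and all $n$ columns of $L$. *)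

theory Defs
  imports "HOL-Combinatorics.Combinatorics"
begin

definition latin_square :: "nat \<Rightarrow> (nat \<Rightarrow> nat \<Rightarrow> nat) \<Rightarrow> bool" where
  "latin_square n L \<longleftrightarrow>
     (\<forall>r\<in>{1..n}. bij_betw (\<lambda>c. L r c) {1..n} {1..n}) \<and>
     (\<forall>c\<in>{1..n}. bij_betw (\<lambda>r. L r c) {1..n} {1..n})"

definition row_perm :: "nat \<Rightarrow> (nat \<Rightarrow> nat \<Rightarrow> nat) \<Rightarrow> nat \<Rightarrow> nat \<Rightarrow> nat" where
  "row_perm n L r = (\<lambda>i. if i \<in> {1..n} then (THE c. c \<in> {1..n} \<and> L r c = i) else i)"

definition col_perm :: "nat \<Rightarrow> (nat \<Rightarrow> nat \<Rightarrow> nat) \<Rightarrow> nat \<Rightarrow> nat \<Rightarrow> nat" where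
  "col_perm n L c = (\<lambda>i. if i \<in> {1..n} then (THE r. r \<in> {1..n} \<and> L r c = i) else i)"

definition reduced :: "nat \<Rightarrow> (nat \<Rightarrow> nat \<Rightarrow> nat) \<Rightarrow> bool" where
  "reduced n L \<longleftrightarrow> row_perm n L 1 = id \<and> col_perm n L 1 = id"

definition par :: "nat \<Rightarrow> (nat \<Rightarrow> nat \<Rightarrow> nat) \<Rightarrow> int" where
  "par n L = (\<Prod>r\<in>{1..n}. sign (row_perm n L r)) * (\<Prod>c\<in>{1..n}. sign (col_perm n L c))"

text \<open>Isotopism action: L'(alpha r, beta c) = gamma (L r c).\<close>
definition isotope :: "(nat \<Rightarrow> nat) \<Rightarrow> (nat \<Rightarrow> nat) \<Rightarrow> (nat \<Rightarrow> nat) \<Rightarrow> (nat \<Rightarrow> nat \<Rightarrow> nat) \<Rightarrow> (nat \<Rightarrow> nat \<Rightarrow> nat)" where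
  "isotope \<alpha> \<beta> \<gamma> L = (\<lambda>r c. \<gamma> (L (inv \<alpha> r) (inv \<beta> c)))"

end

theory Submission
  imports Defs
begin

text \<open>For any isotopism \<open>\<Theta> = (\<alpha>, \<beta>, \<gamma>)\<close>, row \<open>r\<close> of \<open>\<Theta>(L)\<close> is
  \<open>\<beta> \<circ> \<sigma> (inv \<alpha> r) \<circ> inv \<gamma>\<close> and column \<open>c\<close> is \<open>\<alpha> \<circ> \<pi> (inv \<beta> c) \<circ> inv \<gamma>\<close>.
  The rows and columns of \<open>L\<close> are thus only reindexed, and taking signs gives
  \<open>par (\<Theta> L) = (sign \<alpha> * sign \<beta>) ^ n * par L\<close>, the factors \<open>sign \<gamma>\<close> cancelling
  in pairs. For odd \<open>n\<close> the exponent can be dropped, and for the particular \<open>\<beta>\<close> of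
  the theorem \<open>sign \<alpha> * sign \<beta> = sign (\<sigma> (inv \<alpha> 1)) * sign (\<pi> j)\<close>.\<close>

definition transpose_square :: "(nat \<Rightarrow> nat \<Rightarrow> nat) \<Rightarrow> nat \<Rightarrow> nat \<Rightarrow> nat" where
  "transpose_square L = (\<lambda>r c. L c r)"

lemma col_perm_eq_row_perm_transpose:
  "col_perm n L c = row_perm n (transpose_square L) c"
  by (simp add: col_perm_def row_perm_def transpose_square_def)

lemma latin_square_transpose:
  "latin_square n (transpose_square L) \<longleftrightarrow> latin_square n L"
  by (auto simp: latin_square_def transpose_square_def)

lemma transpose_isotope:
  "transpose_square (isotope \<alpha> \<beta> \<gamma> L) = isotope \<beta> \<alpha> \<gamma> (transpose_square L)"
  by (simp add: transpose_square_def isotope_def)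

lemma row_perm_eqI:
  assumes P: "P permutes {1..n}" and row: "\<And>c. c \<in> {1..n} \<Longrightarrow> P (L r c) = c"
  shows "row_perm n L r = P"
proof
  fix i
  show "row_perm n L r i = P i"
  proof (cases "i \<in> {1..n}")
    case True
    have Pi: "P i \<in> {1..n}" using permutes_in_image[OF P] True by blast
    have "P (L r (P i)) = P i" using row[OF Pi] .
    hence "L r (P i) = i" using permutes_inj[OF P] by (auto dest: injD)
    hence "(THE c. c \<in> {1..n} \<and> L r c = i) = P i"
      using Pi row by (intro the_equality) auto
    thus ?thesis using True by (simp add: row_perm_def)
  next
    case False
    thus ?thesis unfolding row_perm_def using permutes_not_in[OF P False] by auto
  qed
qed

lemma row_perm_permutes_and_apply:
  assumes "latin_square n L" "r \<in> {1..n}"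
  shows "row_perm n L r permutes {1..n} \<and> (\<forall>c\<in>{1..n}. row_perm n L r (L r c) = c)"
proof -
  let ?S = "{1..n}"
  have bij: "bij_betw (L r) ?S ?S" using assms unfolding latin_square_def by blast
  define P where "P = (\<lambda>i. if i \<in> ?S then inv_into ?S (L r) i else i)"
  have "bij_betw P ?S ?S"
    using bij_betw_inv_into[OF bij] by (rule bij_betw_cong[THEN iffD1, rotated]) (simp add: P_def)
  hence P: "P permutes ?S" by (rule bij_imp_permutes) (auto simp: P_def)
  have row: "P (L r c) = c" if "c \<in> ?S" for c
    using that bij bij_betw_apply[OF bij that] bij_betw_imp_inj_on[OF bij]
    by (simp add: P_def)
  have "row_perm n L r = P" using P row by (rule row_perm_eqI)
  thus ?thesis using P row by simp
qed

lemma row_perm_permutes: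
  "latin_square n L \<Longrightarrow> r \<in> {1..n} \<Longrightarrow> row_perm n L r permutes {1..n}"
  using row_perm_permutes_and_apply by blast

lemma row_perm_apply:
  "latin_square n L \<Longrightarrow> r \<in> {1..n} \<Longrightarrow> c \<in> {1..n} \<Longrightarrow> row_perm n L r (L r c) = c"
  using row_perm_permutes_and_apply by blast

lemma col_perm_permutes:
  "latin_square n L \<Longrightarrow> c \<in> {1..n} \<Longrightarrow> col_perm n L c permutes {1..n}"
  unfolding col_perm_eq_row_perm_transpose
  by (rule row_perm_permutes) (simp_all add: latin_square_transpose)

lemma row_perm_isotope:
  assumes L: "latin_square n L" and r: "r \<in> {1..n}"
    and \<alpha>: "\<alpha> permutes {1..n}" and \<beta>: "\<beta> permutes {1..n}" and \<gamma>: "\<gamma> permutes {1..n}"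
  shows "row_perm n (isotope \<alpha> \<beta> \<gamma> L) r = \<beta> \<circ> row_perm n L (inv \<alpha> r) \<circ> inv \<gamma>"
proof (rule row_perm_eqI)
  have r': "inv \<alpha> r \<in> {1..n}" using r permutes_in_image[OF permutes_inv[OF \<alpha>]] by blast
  show "\<beta> \<circ> row_perm n L (inv \<alpha> r) \<circ> inv \<gamma> permutes {1..n}"
    by (intro permutes_compose permutes_inv row_perm_permutes L r' \<beta> \<gamma>)
  fix c assume c: "c \<in> {1..n}"
  have c': "inv \<beta> c \<in> {1..n}" using c permutes_in_image[OF permutes_inv[OF \<beta>]] by blast
  show "(\<beta> \<circ> row_perm n L (inv \<alpha> r) \<circ> inv \<gamma>) (isotope \<alpha> \<beta> \<gamma> L r c) = c"
    using row_perm_apply[OF L r' c'] \<beta> \<gamma> by (simp add: isotope_def permutes_inverses)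
qed

lemma col_perm_isotope:
  assumes "latin_square n L" "c \<in> {1..n}"
    and "\<alpha> permutes {1..n}" "\<beta> permutes {1..n}" "\<gamma> permutes {1..n}"
  shows "col_perm n (isotope \<alpha> \<beta> \<gamma> L) c = \<alpha> \<circ> col_perm n L (inv \<beta> c) \<circ> inv \<gamma>"
  using row_perm_isotope[of n "transpose_square L" c \<beta> \<alpha> \<gamma>] assms
  by (simp add: col_perm_eq_row_perm_transpose transpose_isotope latin_square_transpose)

lemma sign_comp_comp_inv:
  assumes "finite S" "p permutes S" "q permutes S" "s permutes S"
  shows "sign (p \<circ> q \<circ> inv s) = sign p * sign q * sign s"
proof -
  have "permutation p" "permutation q" "permutation s"
    using assms permutes_imp_permutation by blast+
  thus ?thesis by (simp add: sign_compose sign_inverse permutation_compose permutation_inverse)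
qed

lemma sign_row_perm_isotope:
  assumes L: "latin_square n L" and r: "r \<in> {1..n}"
    and \<alpha>: "\<alpha> permutes {1..n}" and \<beta>: "\<beta> permutes {1..n}" and \<gamma>: "\<gamma> permutes {1..n}"
  shows "sign (row_perm n (isotope \<alpha> \<beta> \<gamma> L) r) = sign \<beta> * sign \<gamma> * sign (row_perm n L (inv \<alpha> r))"
proof -
  have "inv \<alpha> r \<in> {1..n}" using r permutes_in_image[OF permutes_inv[OF \<alpha>]] by blast
  hence "row_perm n L (inv \<alpha> r) permutes {1..n}" by (rule row_perm_permutes[OF L])
  thus ?thesis
    by (simp add: row_perm_isotope[OF assms] sign_comp_comp_inv[OF finite_atLeastAtMost \<beta> _ \<gamma>])
qed

lemma sign_col_perm_isotope:
  assumes "latin_square n L" "c \<in> {1..n}"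
    and "\<alpha> permutes {1..n}" "\<beta> permutes {1..n}" "\<gamma> permutes {1..n}"
  shows "sign (col_perm n (isotope \<alpha> \<beta> \<gamma> L) c) = sign \<alpha> * sign \<gamma> * sign (col_perm n L (inv \<beta> c))"
  using sign_row_perm_isotope[of n "transpose_square L" c \<beta> \<alpha> \<gamma>] assms
  by (simp add: col_perm_eq_row_perm_transpose transpose_isotope latin_square_transpose)

lemma prod_reindex_inv_permutes:
  assumes "\<alpha> permutes S"
  shows "(\<Prod>x\<in>S. f (inv \<alpha> x)) = (\<Prod>x\<in>S. f x)"
  using prod.reindex_bij_betw[OF permutes_imp_bij[OF permutes_inv[OF assms]], of f] by simp

lemma par_isotope:
  assumes L: "latin_square n L"
    and \<alpha>: "\<alpha> permutes {1..n}" and \<beta>: "\<beta> permutes {1..n}" and \<gamma>: "\<gamma> permutes {1..n}"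
  shows "par n (isotope \<alpha> \<beta> \<gamma> L) = (sign \<alpha> * sign \<beta>) ^ n * par n L"
proof -
  let ?S = "{1..n}" and ?M = "isotope \<alpha> \<beta> \<gamma> L"
  have rows: "(\<Prod>r\<in>?S. sign (row_perm n ?M r))
      = (sign \<beta> * sign \<gamma>) ^ n * (\<Prod>r\<in>?S. sign (row_perm n L r))"
    using prod_reindex_inv_permutes[OF \<alpha>, of "\<lambda>r. sign (row_perm n L r)"]
    by (simp add: sign_row_perm_isotope[OF L _ \<alpha> \<beta> \<gamma>] prod.distrib)
  have cols: "(\<Prod>c\<in>?S. sign (col_perm n ?M c))
      = (sign \<alpha> * sign \<gamma>) ^ n * (\<Prod>c\<in>?S. sign (col_perm n L c))"
    using prod_reindex_inv_permutes[OF \<beta>, of "\<lambda>c. sign (col_perm n L c)"]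
    by (simp add: sign_col_perm_isotope[OF L _ \<alpha> \<beta> \<gamma>] prod.distrib)
  have "par n ?M = ((sign \<beta> * sign \<gamma>) * (sign \<alpha> * sign \<gamma>)) ^ n * par n L"
    unfolding par_def rows cols power_mult_distrib by (simp only: ac_simps)
  also have "(sign \<beta> * sign \<gamma>) * (sign \<alpha> * sign \<gamma>) = sign \<alpha> * sign \<beta>"
    by (simp add: ac_simps)
  finally show ?thesis .
qed

lemma sign_power_odd: "odd n \<Longrightarrow> sign p ^ n = sign p"
  by (cases p rule: sign_cases) auto

theorem lemma2p5:
  fixes n :: nat and L :: "nat \<Rightarrow> nat \<Rightarrow> nat" and \<alpha> :: "nat \<Rightarrow> nat" and j :: nat
  assumes "odd n"
    and "latin_square n L"
    and "reduced n L"
    and "\<alpha> permutes {1..n}"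
    and "j \<in> {1..n}"
  shows "par n (isotope \<alpha>
                  (\<alpha> \<circ> col_perm n L j \<circ> inv (row_perm n L (inv \<alpha> 1)))
                  (\<alpha> \<circ> col_perm n L j) L)
         = sign (row_perm n L (inv \<alpha> 1)) * sign (col_perm n L j) * par n L"
proof -
  let ?\<sigma> = "row_perm n L (inv \<alpha> 1)" and ?\<pi> = "col_perm n L j"
  have "1 \<in> {1..n}" using assms(1) by (cases n) auto
  hence "inv \<alpha> 1 \<in> {1..n}" using permutes_in_image[OF permutes_inv[OF assms(4)]] by blast
  hence \<sigma>: "?\<sigma> permutes {1..n}" by (rule row_perm_permutes[OF assms(2)])
  have \<pi>: "?\<pi> permutes {1..n}" using assms(2,5) by (rule col_perm_permutes)
  have \<beta>: "\<alpha> \<circ> ?\<pi> \<circ> inv ?\<sigma> permutes {1..n}"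
    by (intro permutes_compose permutes_inv assms(4) \<pi> \<sigma>)
  have \<gamma>: "\<alpha> \<circ> ?\<pi> permutes {1..n}" by (intro permutes_compose assms(4) \<pi>)
  have "sign (\<alpha> \<circ> ?\<pi> \<circ> inv ?\<sigma>) = sign \<alpha> * sign ?\<pi> * sign ?\<sigma>"
    by (rule sign_comp_comp_inv[OF finite_atLeastAtMost assms(4) \<pi> \<sigma>])
  hence "sign \<alpha> * sign (\<alpha> \<circ> ?\<pi> \<circ> inv ?\<sigma>) = sign ?\<sigma> * sign ?\<pi>"
    by (simp add: mult.assoc mult.commute)
  moreover have "(sign ?\<sigma> * sign ?\<pi>) ^ n = sign ?\<sigma> * sign ?\<pi>"
    by (simp only: power_mult_distrib sign_power_odd[OF assms(1)])
  ultimately show ?thesis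
    by (simp only: par_isotope[OF assms(2,4) \<beta> \<gamma>])
qed

end
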